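(* Consider the coupled opinion–network system described in the context with logistic weight dynamics, and assume there is a constant $c\ge 1/2$ with $\phi(r)>c$ for all $r\in[-2,2]$. Then the population reaches consensus (there exists $x^*$ with $x_i(t)\to x^*$ for all $i$) and, for all $i,j$, $w_{ij}(t)\to \mathbb{1}\{w_{ij}(0)>0\}$ as $t\to\infty$.
   Context: There are $N$ individuals with opinions $x_i(t)\in[-1,1]$ and edge weights $w_{ij}(t)\in[0,1]$. The degree is $k_i=\sum_{j=1}^N w_{ij}$. With interaction function $\phi:[-2,2]\to[0,1]$, the system with logistic weight dynamics is $\frac{dx_i}{dt}=\frac{1}{k_i}\sum_{j\neq i} w_{ij}\,\phi(x_j-x_i)(x_j-x_i)$, $\frac{dw_{ij}}{dt}=w_{ij}(1-w_{ij})\big(2\phi(x_j-x_i)-1\big)$ for $i\neq j$, and $w_{ii}\equiv 1$. Standing assumptions: $\phi$ is Lipschitz continuous, even, and $\phi(0)>0$; $x_1(0)\le\dots\le x_N(0)$; $w_{ii}=1$; the initial network $w(0)$ is strongly connected (for all $i,j$ there is a sequence $i=i_0,\dots,i_m=j$ with $w_{i_n i_{n+1}}(0)>0$). *)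

theory Defs
  imports "HOL-Analysis.Analysis"
begin

definition strongly_connected :: "nat \<Rightarrow> (nat \<Rightarrow> nat \<Rightarrow> real) \<Rightarrow> bool" where
  "strongly_connected N W \<longleftrightarrow>
     (\<forall>i<N. \<forall>j<N. \<exists>(p::nat \<Rightarrow> nat) m. p 0 = i \<and> p m = j \<and>
        (\<forall>n\<le>m. p n < N) \<and> (\<forall>n<m. W (p n) (p (Suc n)) > 0))"

definition degree :: "nat \<Rightarrow> (nat \<Rightarrow> nat \<Rightarrow> real) \<Rightarrow> nat \<Rightarrow> real" where
  "degree N W i = (\<Sum>j<N. W i j)"

definition is_logistic_solution ::
  "nat \<Rightarrow> (real \<Rightarrow> real) \<Rightarrow> (real \<Rightarrow> nat \<Rightarrow> real) \<Rightarrow> (real \<Rightarrow> nat \<Rightarrow> nat \<Rightarrow> real) \<Rightarrow> bool" where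
  "is_logistic_solution N \<phi> x w \<longleftrightarrow>
     (\<forall>t\<ge>0. \<forall>i<N. x t i \<in> {-1..1}) \<and>
     (\<forall>t\<ge>0. \<forall>i<N. \<forall>j<N. w t i j \<in> {0..1}) \<and>
     (\<forall>t\<ge>0. \<forall>i<N. w t i i = 1) \<and>
     (\<forall>t\<ge>0. \<forall>i<N.
        ((\<lambda>s. x s i) has_real_derivative
           (1 / degree N (w t) i) * (\<Sum>j\<in>{..<N} - {i}. w t i j * \<phi> (x t j - x t i) * (x t j - x t i)))
        (at t within {0..})) \<and>
     (\<forall>t\<ge>0. \<forall>i<N. \<forall>j<N. i \<noteq> j \<longrightarrow>
        ((\<lambda>s. w s i j) has_real_derivative
           w t i j * (1 - w t i j) * (2 * \<phi> (x t j - x t i) - 1))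
        (at t within {0..}))"

end

theory Submission
  imports Defs
begin

text \<open>Since \<phi> is continuous and exceeds 1/2 on [-2, 2], the factor 2\<phi> - 1 in the weight
  equation is bounded below by some \<delta> > 0. Hence every weight is nondecreasing: a positive weight
  tends to 1 at an exponential rate, and a zero weight stays zero. The opinion equation is
  therefore a linear averaging system whose coefficients w i j * \<phi> (x j - x i) / k i are
  nonnegative, have row sums at most 1, and are bounded below by a fixed \<alpha> > 0 on every edge of
  the strongly connected initial network. For such a system the smallest opinion never decreases
  and the largest never increases, and within time T (a bound on the lengths of walks between
  agents) the largest opinion lifts every other agent along a walk by a fixed fraction of the
  spread. So the spread contracts geometrically and all opinions converge to a common limit.\<close>

lemma DERIV_nonneg_imp_increasing_within:
  fixes f f' :: "real \<Rightarrow> real"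
  assumes "a \<le> b" and "{a..b} \<subseteq> S"
    and deriv: "\<And>\<tau>. \<tau> \<in> {a..b} \<Longrightarrow> (f has_real_derivative f' \<tau>) (at \<tau> within S)"
    and nonneg: "\<And>\<tau>. \<tau> \<in> {a..b} \<Longrightarrow> 0 \<le> f' \<tau>"
  shows "f a \<le> f b"
proof (rule DERIV_nonneg_imp_increasing_open[OF \<open>a \<le> b\<close>])
  have deriv_Icc: "(f has_real_derivative f' \<tau>) (at \<tau> within {a..b})" if "\<tau> \<in> {a..b}" for \<tau>
    using has_field_derivative_subset[OF deriv[OF that] \<open>{a..b} \<subseteq> S\<close>] .
  show "\<exists>z. (f has_real_derivative z) (at y) \<and> 0 \<le> z" if "a < y" "y < b" for y
    using deriv_Icc[of y] nonneg[of y] that by (auto simp: at_within_Icc_at)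
  show "continuous_on {a..b} f"
    unfolding continuous_on_eq_continuous_within using deriv_Icc DERIV_continuous by blast
qed

lemma gronwall_nonpos:
  fixes V V' :: "real \<Rightarrow> real"
  assumes "a \<le> b" and "{a..b} \<subseteq> S"
    and deriv: "\<And>\<tau>. \<tau> \<in> {a..b} \<Longrightarrow> (V has_real_derivative V' \<tau>) (at \<tau> within S)"
    and linear_bound: "\<And>\<tau>. \<tau> \<in> {a..b} \<Longrightarrow> V' \<tau> \<le> K * V \<tau>"
    and "V a \<le> 0"
  shows "V b \<le> 0"
proof -
  have "- V a * exp (- K * a) \<le> - V b * exp (- K * b)"
  proof (rule DERIV_nonneg_imp_increasing_within[OF assms(1,2)])
    show "((\<lambda>\<tau>. - V \<tau> * exp (- K * \<tau>)) has_real_derivative (K * V \<tau> - V' \<tau>) * exp (- K * \<tau>))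
        (at \<tau> within S)" if "\<tau> \<in> {a..b}" for \<tau>
      by (auto intro!: derivative_eq_intros deriv[OF that] simp: algebra_simps)
    show "0 \<le> (K * V \<tau> - V' \<tau>) * exp (- K * \<tau>)" if "\<tau> \<in> {a..b}" for \<tau>
      using linear_bound[OF that] by simp
  qed
  moreover have "0 \<le> - V a * exp (- K * a)" using \<open>V a \<le> 0\<close> by (simp add: mult_nonpos_nonneg)
  ultimately have "0 \<le> - V b * exp (- K * b)" by linarith
  then show ?thesis by (simp add: mult_le_0_iff)
qed

lemma exp_relaxation_lower_bound:
  fixes f f' :: "real \<Rightarrow> real"
  assumes "s \<le> t" and "{s..t} \<subseteq> S"
    and deriv: "\<And>\<tau>. \<tau> \<in> {s..t} \<Longrightarrow> (f has_real_derivative f' \<tau>) (at \<tau> within S)"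
    and drift: "\<And>\<tau>. \<tau> \<in> {s..t} \<Longrightarrow> A - f \<tau> \<le> f' \<tau>"
  shows "A + (f s - A) * exp (- (t - s)) \<le> f t"
proof -
  let ?V = "\<lambda>\<tau>. A + (f s - A) * exp (- (\<tau> - s)) - f \<tau>"
  have "?V t \<le> 0"
  proof (rule gronwall_nonpos[OF assms(1,2), where K = "-1"])
    show "(?V has_real_derivative - (f s - A) * exp (- (\<tau> - s)) - f' \<tau>) (at \<tau> within S)"
      if "\<tau> \<in> {s..t}" for \<tau>
      by (auto intro!: derivative_eq_intros deriv[OF that] simp: algebra_simps)
    show "- (f s - A) * exp (- (\<tau> - s)) - f' \<tau> \<le> -1 * ?V \<tau>" if "\<tau> \<in> {s..t}" for \<tau>
      using drift[OF that] by (simp add: algebra_simps)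
  qed simp
  then show ?thesis by simp
qed

lemma has_real_derivative_pos_part_square:
  "((\<lambda>z::real. (max z 0)\<^sup>2) has_real_derivative 2 * max z 0) (at z)"
proof (cases z "0::real" rule: linorder_cases)
  case less
  have "((\<lambda>z::real. 0) has_real_derivative 2 * max z 0) (at z)" using less by simp
  then show ?thesis
    by (rule has_field_derivative_transform_within_open[where S = "{..<0}"]) (use less in auto)
next
  case greater
  have "((\<lambda>z::real. z\<^sup>2) has_real_derivative 2 * max z 0) (at z)"
    using greater by (auto intro!: derivative_eq_intros)
  then show ?thesis
    by (rule has_field_derivative_transform_within_open[where S = "{0<..}"]) (use greater in auto)
next
  case equal
  have "((\<lambda>y::real. (max y 0)\<^sup>2 / y) \<longlongrightarrow> 0) (at 0)"
  proof (rule tendsto_0_le[where f = "\<lambda>y::real. y" and K = 1])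
    show "((\<lambda>y::real. y) \<longlongrightarrow> 0) (at 0)" by (rule tendsto_ident_at)
    show "\<forall>\<^sub>F y in at 0. norm ((max y 0)\<^sup>2 / y) \<le> norm (y::real) * 1"
      by (intro always_eventually allI) (auto simp: power2_eq_square max_def)
  qed
  then show ?thesis using equal by (simp add: has_field_derivative_iff)
qed

definition consensus_drift ::
  "nat \<Rightarrow> (real \<Rightarrow> nat \<Rightarrow> real) \<Rightarrow> (real \<Rightarrow> nat \<Rightarrow> nat \<Rightarrow> real) \<Rightarrow> real \<Rightarrow> nat \<Rightarrow> real" where
  "consensus_drift N y a t i = (\<Sum>j\<in>{..<N} - {i}. a t i j * (y t j - y t i))"

definition consensus_dynamics ::
  "nat \<Rightarrow> (real \<Rightarrow> nat \<Rightarrow> real) \<Rightarrow> (real \<Rightarrow> nat \<Rightarrow> nat \<Rightarrow> real) \<Rightarrow> bool" where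
  "consensus_dynamics N y a \<longleftrightarrow>
    (\<forall>t\<ge>0. \<forall>i<N. ((\<lambda>s. y s i) has_real_derivative consensus_drift N y a t i) (at t within {0..})) \<and>
    (\<forall>t\<ge>0. \<forall>i<N. \<forall>j<N. 0 \<le> a t i j) \<and>
    (\<forall>t\<ge>0. \<forall>i<N. (\<Sum>j\<in>{..<N} - {i}. a t i j) \<le> 1)"

lemma
  assumes "consensus_dynamics N y a" and "0 \<le> t" and "i < N"
  shows consensus_dynamics_deriv:
      "((\<lambda>s. y s i) has_real_derivative consensus_drift N y a t i) (at t within {0..})"
    and consensus_dynamics_coeff_nonneg: "j < N \<Longrightarrow> 0 \<le> a t i j"
    and consensus_dynamics_row_sum: "(\<Sum>j\<in>{..<N} - {i}. a t i j) \<le> 1"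
  using assms unfolding consensus_dynamics_def by blast+

lemma consensus_dynamics_uminus:
  assumes "consensus_dynamics N y a"
  shows "consensus_dynamics N (\<lambda>t i. - y t i) a"
proof -
  have "consensus_drift N (\<lambda>t i. - y t i) a t i = - consensus_drift N y a t i" for t i
    unfolding consensus_drift_def by (simp add: sum_negf[symmetric] algebra_simps)
  then show ?thesis
    using assms unfolding consensus_dynamics_def by (auto intro!: derivative_eq_intros)
qed

lemma neg_pos_part_mul_diff_le:
  fixes m p q :: real
  shows "- max (m - p) 0 * (q - p) \<le> (max (m - q) 0)\<^sup>2"
proof (cases "p < m")
  case True
  define u v where "u = m - p" and "v = max (m - q) 0"
  have "- max (m - p) 0 * (q - p) = u * (m - q) - u\<^sup>2"
    using True by (simp add: u_def power2_eq_square algebra_simps)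
  also have "\<dots> \<le> u * v - u\<^sup>2" using True by (simp add: u_def v_def mult_left_mono)
  also have "\<dots> = v\<^sup>2 - ((u - v)\<^sup>2 + u * v)" by (simp add: power2_eq_square algebra_simps)
  also have "\<dots> \<le> v\<^sup>2"
  proof -
    have "0 \<le> u * v" using True by (simp add: u_def v_def)
    then show ?thesis using zero_le_power2[of "u - v"] by linarith
  qed
  finally show ?thesis unfolding v_def .
qed simp

text \<open>The total squared deficit below m satisfies a linear differential inequality, so by
  Gronwall it stays zero once it is zero.\<close>
lemma consensus_dynamics_min_principle:
  assumes cs: "consensus_dynamics N y a" and "0 \<le> t0" "t0 \<le> t"
    and lb: "\<And>j. j < N \<Longrightarrow> m \<le> y t0 j" and "i < N"
  shows "m \<le> y t i"
proof -
  define u where "u \<tau> l = max (m - y \<tau> l) 0" for \<tau> l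
  define V where "V \<tau> = (\<Sum>l<N. (u \<tau> l)\<^sup>2)" for \<tau>
  have u_sq_le_V: "(u \<tau> l)\<^sup>2 \<le> V \<tau>" if "l < N" for \<tau> l
    unfolding V_def using that by (intro member_le_sum) auto
  have deficit_drift: "u \<tau> l * - consensus_drift N y a \<tau> l \<le> V \<tau>" if "0 \<le> \<tau>" "l < N" for \<tau> l
  proof -
    have "u \<tau> l * - consensus_drift N y a \<tau> l
        = (\<Sum>j\<in>{..<N} - {l}. a \<tau> l j * (- u \<tau> l * (y \<tau> j - y \<tau> l)))"
      unfolding consensus_drift_def by (simp add: sum_distrib_left sum_negf[symmetric] algebra_simps)
    also have "\<dots> \<le> (\<Sum>j\<in>{..<N} - {l}. a \<tau> l j * V \<tau>)"
    proof (intro sum_mono mult_left_mono)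
      fix j assume "j \<in> {..<N} - {l}"
      then show "0 \<le> a \<tau> l j" using consensus_dynamics_coeff_nonneg[OF cs that] by simp
      show "- u \<tau> l * (y \<tau> j - y \<tau> l) \<le> V \<tau>"
        using neg_pos_part_mul_diff_le[of m "y \<tau> l" "y \<tau> j"] u_sq_le_V[of j \<tau>] \<open>j \<in> _\<close>
        unfolding u_def by simp
    qed
    also have "\<dots> \<le> V \<tau>"
      using consensus_dynamics_row_sum[OF cs that] mult_right_mono[of _ 1 "V \<tau>"]
      by (simp add: V_def sum_distrib_right[symmetric] sum_nonneg)
    finally show ?thesis .
  qed
  have "V t \<le> 0"
  proof (rule gronwall_nonpos[OF \<open>t0 \<le> t\<close>, where S = "{0..}" and K = "2 * real N"])
    show "(V has_real_derivative (\<Sum>l<N. 2 * u \<tau> l * - consensus_drift N y a \<tau> l)) (at \<tau> within {0..})"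
      if "\<tau> \<in> {t0..t}" for \<tau>
      unfolding V_def u_def using that \<open>0 \<le> t0\<close>
      by (intro DERIV_sum DERIV_chain2[OF has_real_derivative_pos_part_square]
          derivative_eq_intros) (auto intro: consensus_dynamics_deriv[OF cs])
    show "(\<Sum>l<N. 2 * u \<tau> l * - consensus_drift N y a \<tau> l) \<le> 2 * real N * V \<tau>"
      if "\<tau> \<in> {t0..t}" for \<tau>
      using sum_mono[of "{..<N}" "\<lambda>l. 2 * u \<tau> l * - consensus_drift N y a \<tau> l" "\<lambda>_. 2 * V \<tau>"]
        deficit_drift that \<open>0 \<le> t0\<close> by auto
    show "V t0 \<le> 0" unfolding V_def u_def using lb by (simp add: sum_nonpos)
  qed (use \<open>0 \<le> t0\<close> in auto)
  with u_sq_le_V[OF \<open>i < N\<close>, of t] have "(u t i)\<^sup>2 \<le> 0" by linarith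
  then show ?thesis unfolding u_def by (simp add: max_def split: if_splits)
qed

lemma consensus_dynamics_max_principle:
  assumes "consensus_dynamics N y a" and "0 \<le> t0" "t0 \<le> t"
    and "\<And>j. j < N \<Longrightarrow> y t0 j \<le> M" and "i < N"
  shows "y t i \<le> M"
  using consensus_dynamics_min_principle[OF consensus_dynamics_uminus[OF assms(1)] assms(2,3),
      of "- M" i] assms(4,5) by auto

lemma
  assumes cs: "consensus_dynamics N y a" and "0 \<le> \<tau>" "i < N"
    and lb: "\<And>l. l < N \<Longrightarrow> m \<le> y \<tau> l"
  shows consensus_drift_ge_gap: "m - y \<tau> i \<le> consensus_drift N y a \<tau> i"
    and consensus_drift_ge_edge:
      "j < N \<Longrightarrow> i \<noteq> j \<Longrightarrow> a \<tau> i j * (y \<tau> j - m) + (m - y \<tau> i) \<le> consensus_drift N y a \<tau> i"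
proof -
  let ?J = "{..<N} - {i}"
  have pull_nonneg: "0 \<le> a \<tau> i l * (y \<tau> l - m)" if "l < N" for l
    using consensus_dynamics_coeff_nonneg[OF cs \<open>0 \<le> \<tau>\<close> \<open>i < N\<close> that] lb[OF that] by simp
  have "consensus_drift N y a \<tau> i
      = (\<Sum>l\<in>?J. a \<tau> i l * (y \<tau> l - m)) + (\<Sum>l\<in>?J. a \<tau> i l) * (m - y \<tau> i)"
    unfolding consensus_drift_def sum_distrib_right sum.distrib[symmetric]
    by (intro sum.cong) (auto simp: algebra_simps)
  moreover have "m - y \<tau> i \<le> (\<Sum>l\<in>?J. a \<tau> i l) * (m - y \<tau> i)"
    using consensus_dynamics_row_sum[OF cs \<open>0 \<le> \<tau>\<close> \<open>i < N\<close>] lb[OF \<open>i < N\<close>]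
      mult_right_mono_neg[of "\<Sum>l\<in>?J. a \<tau> i l" 1 "m - y \<tau> i"] by simp
  moreover have "0 \<le> (\<Sum>l\<in>?J. a \<tau> i l * (y \<tau> l - m))"
    using pull_nonneg by (intro sum_nonneg) auto
  moreover have "a \<tau> i j * (y \<tau> j - m) \<le> (\<Sum>l\<in>?J. a \<tau> i l * (y \<tau> l - m))" if "j < N" "i \<noteq> j"
    using that pull_nonneg by (intro member_le_sum) auto
  ultimately show "m - y \<tau> i \<le> consensus_drift N y a \<tau> i"
    and "j < N \<Longrightarrow> i \<noteq> j \<Longrightarrow> a \<tau> i j * (y \<tau> j - m) + (m - y \<tau> i) \<le> consensus_drift N y a \<tau> i"
    by linarith+
qed

lemma consensus_dynamics_exp_lower_bound:
  assumes cs: "consensus_dynamics N y a" and "0 \<le> t0" "t0 \<le> t" "i < N"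
    and lb: "\<And>l. l < N \<Longrightarrow> m \<le> y t0 l"
  shows "exp (- (t - t0)) * (y t0 i - m) \<le> y t i - m"
proof -
  have "m + (y t0 i - m) * exp (- (t - t0)) \<le> y t i"
  proof (rule exp_relaxation_lower_bound[OF \<open>t0 \<le> t\<close>, where S = "{0..}"])
    fix \<tau> assume "\<tau> \<in> {t0..t}"
    then have "0 \<le> \<tau>" and lb\<tau>: "\<And>l. l < N \<Longrightarrow> m \<le> y \<tau> l"
      using \<open>0 \<le> t0\<close> consensus_dynamics_min_principle[OF cs \<open>0 \<le> t0\<close> _ lb] by auto
    show "((\<lambda>s. y s i) has_real_derivative consensus_drift N y a \<tau> i) (at \<tau> within {0..})"
      by (rule consensus_dynamics_deriv[OF cs \<open>0 \<le> \<tau>\<close> \<open>i < N\<close>])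
    show "m - y \<tau> i \<le> consensus_drift N y a \<tau> i"
      by (rule consensus_drift_ge_gap[OF cs \<open>0 \<le> \<tau>\<close> \<open>i < N\<close> lb\<tau>])
  qed (use \<open>0 \<le> t0\<close> in auto)
  then show ?thesis by (simp add: algebra_simps)
qed

lemma consensus_dynamics_edge_pull:
  assumes cs: "consensus_dynamics N y a" and "0 \<le> t0" "t0 \<le> s" "s + 1 \<le> t"
    and lb: "\<And>l. l < N \<Longrightarrow> m \<le> y t0 l" and "i < N" "j < N" "i \<noteq> j"
    and "0 \<le> \<alpha>" and coeff: "\<And>\<tau>. \<tau> \<in> {s..t} \<Longrightarrow> \<alpha> \<le> a \<tau> i j"
    and "0 \<le> X" and nbr: "\<And>\<tau>. \<tau> \<in> {s..t} \<Longrightarrow> X \<le> y \<tau> j - m"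
  shows "\<alpha> * (1 - exp (-1)) * X \<le> y t i - m"
proof -
  have lb_later: "m \<le> y \<tau> l" if "t0 \<le> \<tau>" "l < N" for \<tau> l
    using consensus_dynamics_min_principle[OF cs \<open>0 \<le> t0\<close> that(1) lb that(2)] .
  have "m + \<alpha> * X + (y s i - (m + \<alpha> * X)) * exp (- (t - s)) \<le> y t i"
  proof (rule exp_relaxation_lower_bound[where S = "{0..}"])
    fix \<tau> assume \<tau>: "\<tau> \<in> {s..t}"
    then have "0 \<le> \<tau>" "t0 \<le> \<tau>" using \<open>0 \<le> t0\<close> \<open>t0 \<le> s\<close> by auto
    show "((\<lambda>s. y s i) has_real_derivative consensus_drift N y a \<tau> i) (at \<tau> within {0..})"
      by (rule consensus_dynamics_deriv[OF cs \<open>0 \<le> \<tau>\<close> \<open>i < N\<close>])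
    have "\<alpha> * X \<le> a \<tau> i j * (y \<tau> j - m)"
      using coeff[OF \<tau>] nbr[OF \<tau>] \<open>0 \<le> \<alpha>\<close> \<open>0 \<le> X\<close> by (intro mult_mono) auto
    then show "m + \<alpha> * X - y \<tau> i \<le> consensus_drift N y a \<tau> i"
      using consensus_drift_ge_edge[OF cs \<open>0 \<le> \<tau>\<close> \<open>i < N\<close> lb_later[OF \<open>t0 \<le> \<tau>\<close>] \<open>j < N\<close> \<open>i \<noteq> j\<close>]
      by linarith
  qed (use assms(2-4) in auto)
  moreover have "- (\<alpha> * X) * exp (-1) \<le> (y s i - (m + \<alpha> * X)) * exp (- (t - s))"
  proof -
    have "- (\<alpha> * X) * exp (-1) \<le> - (\<alpha> * X) * exp (- (t - s))"
      using \<open>s + 1 \<le> t\<close> \<open>0 \<le> \<alpha>\<close> \<open>0 \<le> X\<close> by (intro mult_left_mono_neg) auto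
    also have "\<dots> \<le> (y s i - (m + \<alpha> * X)) * exp (- (t - s))"
      using lb_later[OF \<open>t0 \<le> s\<close> \<open>i < N\<close>] by (intro mult_right_mono) auto
    finally show ?thesis .
  qed
  ultimately show ?thesis by (simp add: algebra_simps)
qed

lemma consensus_dynamics_walk_lower_bound:
  fixes W :: "nat \<Rightarrow> nat \<Rightarrow> real" and p :: "nat \<Rightarrow> nat" and n k :: nat
  assumes cs: "consensus_dynamics N y a" and "0 \<le> \<alpha>" "\<alpha> \<le> 1"
    and edge: "\<And>t i j. 0 \<le> t \<Longrightarrow> i < N \<Longrightarrow> j < N \<Longrightarrow> i \<noteq> j \<Longrightarrow> 0 < W i j \<Longrightarrow> \<alpha> \<le> a t i j"
    and walk: "\<And>l. l \<le> n \<Longrightarrow> p l < N" "\<And>l. l < n \<Longrightarrow> 0 < W (p l) (p (Suc l))"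
    and "0 \<le> t0" and lb: "\<And>l. l < N \<Longrightarrow> m \<le> y t0 l"
    and "k \<le> n" "t0 + real k \<le> t"
  shows "exp (- (t - t0)) * (\<alpha> * (1 - exp (-1))) ^ k * (y t0 (p n) - m) \<le> y t (p (n - k)) - m"
  using \<open>k \<le> n\<close> \<open>t0 + real k \<le> t\<close>
proof (induction k arbitrary: t)
  case 0
  then show ?case
    using consensus_dynamics_exp_lower_bound[OF cs \<open>0 \<le> t0\<close> _ walk(1) lb] by simp
next
  case (Suc k)
  define l where "l = n - Suc k"
  have "n - k = Suc l" and "l < n" using Suc.prems(1) unfolding l_def by auto
  define \<gamma> where "\<gamma> = \<alpha> * (1 - exp (-1::real))"
  have "0 \<le> \<gamma>" "\<gamma> \<le> 1" unfolding \<gamma>_def using \<open>0 \<le> \<alpha>\<close> \<open>\<alpha> \<le> 1\<close> by (auto intro: mult_le_one)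
  define X where "X = exp (- (t - t0)) * \<gamma> ^ k * (y t0 (p n) - m)"
  have "0 \<le> X" unfolding X_def using \<open>0 \<le> \<gamma>\<close> lb walk(1)[of n] by simp
  have nbr: "X \<le> y \<tau> (p (Suc l)) - m" if "\<tau> \<in> {t0 + real k..t}" for \<tau>
  proof -
    have "X \<le> exp (- (\<tau> - t0)) * \<gamma> ^ k * (y t0 (p n) - m)"
      unfolding X_def using that \<open>0 \<le> \<gamma>\<close> lb walk(1)[of n] by (intro mult_right_mono) auto
    also have "\<dots> \<le> y \<tau> (p (Suc l)) - m"
      using Suc.IH[of \<tau>] Suc.prems that \<open>n - k = Suc l\<close> unfolding \<gamma>_def by simp
    finally show ?thesis .
  qed
  have "\<gamma> * X \<le> y t (p l) - m"
  proof (cases "p l = p (Suc l)")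
    case True
    then show ?thesis using nbr[of t] Suc.prems \<open>0 \<le> X\<close> \<open>\<gamma> \<le> 1\<close> mult_left_le_one_le[of X \<gamma>] \<open>0 \<le> \<gamma>\<close>
      by auto
  next
    case False
    show ?thesis unfolding \<gamma>_def
    proof (rule consensus_dynamics_edge_pull[OF cs \<open>0 \<le> t0\<close> _ _ lb _ _ False \<open>0 \<le> \<alpha>\<close> _ \<open>0 \<le> X\<close> nbr])
      show "\<alpha> \<le> a \<tau> (p l) (p (Suc l))" if "\<tau> \<in> {t0 + real k..t}" for \<tau>
        using that \<open>0 \<le> t0\<close> \<open>l < n\<close> False by (intro edge walk) auto
    qed (use Suc.prems \<open>l < n\<close> walk(1) in auto)
  qed
  then show ?case unfolding l_def X_def \<gamma>_def by (simp add: algebra_simps)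
qed

lemma strongly_connected_bounded_walks:
  assumes "strongly_connected N W"
  obtains T :: nat where "\<And>i j. i < N \<Longrightarrow> j < N \<Longrightarrow> \<exists>p n. n \<le> T \<and> p 0 = i \<and> p n = j \<and>
      (\<forall>l\<le>n. p l < N) \<and> (\<forall>l<n. 0 < W (p l) (p (Suc l)))"
proof -
  define is_walk where "is_walk i j n \<longleftrightarrow> (\<exists>p. p 0 = i \<and> p n = j \<and>
      (\<forall>l\<le>n. p l < N) \<and> (\<forall>l<n. 0 < W (p l) (p (Suc l))))" for i j n
  define len where "len i j = (LEAST n. is_walk i j n)" for i j
  have walk_len: "is_walk i j (len i j)" if ij: "i < N" "j < N" for i j
  proof -
    obtain p n where "p 0 = i \<and> p n = j \<and> (\<forall>l\<le>n. p l < N) \<and> (\<forall>l<n. 0 < W (p l) (p (Suc l)))"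
      using assms[unfolded strongly_connected_def, rule_format, OF ij] by blast
    then have "is_walk i j n" unfolding is_walk_def by blast
    then show ?thesis unfolding len_def by (rule LeastI)
  qed
  define T where "T = Max ((\<lambda>(i, j). len i j) ` ({..<N} \<times> {..<N}))"
  have len_le: "len i j \<le> T" if "i < N" "j < N" for i j
    unfolding T_def using that by (intro Max_ge) auto
  show thesis
  proof (rule that)
    fix i j assume "i < N" "j < N"
    then obtain p where "p 0 = i \<and> p (len i j) = j \<and> (\<forall>l\<le>len i j. p l < N) \<and>
        (\<forall>l<len i j. 0 < W (p l) (p (Suc l)))"
      using walk_len unfolding is_walk_def by blast
    with len_le[OF \<open>i < N\<close> \<open>j < N\<close>] show "\<exists>p n. n \<le> T \<and> p 0 = i \<and> p n = j \<and>
        (\<forall>l\<le>n. p l < N) \<and> (\<forall>l<n. 0 < W (p l) (p (Suc l)))" by blast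
  qed
qed

lemma consensus_dynamics_walk_lift:
  fixes W :: "nat \<Rightarrow> nat \<Rightarrow> real" and p :: "nat \<Rightarrow> nat" and n T :: nat
  assumes cs: "consensus_dynamics N y a" and "0 \<le> \<alpha>" "\<alpha> \<le> 1"
    and edge: "\<And>t i j. 0 \<le> t \<Longrightarrow> i < N \<Longrightarrow> j < N \<Longrightarrow> i \<noteq> j \<Longrightarrow> 0 < W i j \<Longrightarrow> \<alpha> \<le> a t i j"
    and walk: "\<And>l. l \<le> n \<Longrightarrow> p l < N" "\<And>l. l < n \<Longrightarrow> 0 < W (p l) (p (Suc l))"
    and "n \<le> T" "0 \<le> t" and lb: "\<And>l. l < N \<Longrightarrow> m \<le> y t l"
  shows "m + exp (- real T) * (\<alpha> * (1 - exp (-1))) ^ T * (y t (p n) - m) \<le> y (t + T) (p 0)"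
proof -
  define \<gamma> where "\<gamma> = \<alpha> * (1 - exp (-1::real))"
  have "0 \<le> \<gamma>" "\<gamma> \<le> 1" unfolding \<gamma>_def using \<open>0 \<le> \<alpha>\<close> \<open>\<alpha> \<le> 1\<close> by (auto intro: mult_le_one)
  have "exp (- (t + T - t)) * \<gamma> ^ n * (y t (p n) - m) \<le> y (t + T) (p (n - n)) - m"
    unfolding \<gamma>_def
    by (rule consensus_dynamics_walk_lower_bound[where W = W, OF cs \<open>0 \<le> \<alpha>\<close> \<open>\<alpha> \<le> 1\<close> edge])
      (use walk \<open>0 \<le> t\<close> lb \<open>n \<le> T\<close> in auto)
  then have "exp (- real T) * \<gamma> ^ n * (y t (p n) - m) \<le> y (t + T) (p 0) - m" by simp
  moreover have "exp (- real T) * \<gamma> ^ T * (y t (p n) - m) \<le> exp (- real T) * \<gamma> ^ n * (y t (p n) - m)"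
    using \<open>n \<le> T\<close> \<open>0 \<le> \<gamma>\<close> \<open>\<gamma> \<le> 1\<close> lb walk(1)[of n]
    by (intro mult_right_mono mult_left_mono power_decreasing) auto
  ultimately show ?thesis unfolding \<gamma>_def by linarith
qed

lemma consensus_dynamics_spread_contraction:
  assumes cs: "consensus_dynamics N y a" and "0 < \<alpha>" "\<alpha> \<le> 1"
    and edge: "\<And>t i j. 0 \<le> t \<Longrightarrow> i < N \<Longrightarrow> j < N \<Longrightarrow> i \<noteq> j \<Longrightarrow> 0 < W i j \<Longrightarrow> \<alpha> \<le> a t i j"
    and sc: "strongly_connected N W" and "0 < N"
  obtains T :: nat and \<beta> :: real where "0 < \<beta>" "\<beta> \<le> 1"
    "\<And>t. 0 \<le> t \<Longrightarrow> Max (y (t + real T) ` {..<N}) - Min (y (t + real T) ` {..<N})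
        \<le> (1 - \<beta>) * (Max (y t ` {..<N}) - Min (y t ` {..<N}))"
proof -
  obtain T where walks: "\<And>i j. i < N \<Longrightarrow> j < N \<Longrightarrow> \<exists>p n. n \<le> T \<and> p 0 = i \<and> p n = j \<and>
      (\<forall>l\<le>n. p l < N) \<and> (\<forall>l<n. 0 < W (p l) (p (Suc l)))"
    using strongly_connected_bounded_walks[OF sc] by blast
  define \<beta> where "\<beta> = exp (- real T) * (\<alpha> * (1 - exp (-1))) ^ T"
  have "0 < \<beta>" "\<beta> \<le> 1"
    unfolding \<beta>_def using \<open>0 < \<alpha>\<close> \<open>\<alpha> \<le> 1\<close> by (auto intro!: mult_le_one power_le_one)
  have fin: "finite (y t ` {..<N})" "y t ` {..<N} \<noteq> {}" for t using \<open>0 < N\<close> by auto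
  have "Max (y (t + real T) ` {..<N}) - Min (y (t + real T) ` {..<N})
      \<le> (1 - \<beta>) * (Max (y t ` {..<N}) - Min (y t ` {..<N}))" if "0 \<le> t" for t :: real
  proof -
    define m M where "m = Min (y t ` {..<N})" and "M = Max (y t ` {..<N})"
    have "M \<in> y t ` {..<N}" unfolding M_def using fin[of t] by (rule Max_in)
    then obtain j where "j < N" "y t j = M" by auto
    have lb: "\<And>l. l < N \<Longrightarrow> m \<le> y t l" and ub: "\<And>l. l < N \<Longrightarrow> y t l \<le> M"
      unfolding m_def M_def using fin by auto
    have "m + \<beta> * (M - m) \<le> y (t + T) i" if "i < N" for i
    proof -
      obtain p n where walk: "n \<le> T" "p 0 = i" "p n = j" "\<forall>l\<le>n. p l < N"
          "\<forall>l<n. 0 < W (p l) (p (Suc l))"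
        using walks[OF \<open>i < N\<close> \<open>j < N\<close>] by blast
      have "m + \<beta> * (y t (p n) - m) \<le> y (t + T) (p 0)"
        unfolding \<beta>_def
        by (rule consensus_dynamics_walk_lift[where W = W, OF cs _ \<open>\<alpha> \<le> 1\<close> edge])
          (use walk \<open>0 < \<alpha>\<close> \<open>0 \<le> t\<close> lb in auto)
      then show ?thesis using walk(2,3) \<open>y t j = M\<close> by simp
    qed
    then have "m + \<beta> * (M - m) \<le> Min (y (t + T) ` {..<N})"
      using fin by simp
    moreover have "Max (y (t + T) ` {..<N}) \<le> M"
      using consensus_dynamics_max_principle[OF cs \<open>0 \<le> t\<close> _ ub] fin by simp
    ultimately show ?thesis unfolding m_def M_def by (simp add: algebra_simps)
  qed
  with \<open>0 < \<beta>\<close> \<open>\<beta> \<le> 1\<close> that show thesis by blast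
qed

lemma consensus_dynamics_spread_arbitrarily_small:
  assumes cs: "consensus_dynamics N y a" and "0 < \<alpha>" "\<alpha> \<le> 1"
    and edge: "\<And>t i j. 0 \<le> t \<Longrightarrow> i < N \<Longrightarrow> j < N \<Longrightarrow> i \<noteq> j \<Longrightarrow> 0 < W i j \<Longrightarrow> \<alpha> \<le> a t i j"
    and sc: "strongly_connected N W" and "0 < N" and "0 < e"
  shows "\<exists>t\<ge>0. Max (y t ` {..<N}) - Min (y t ` {..<N}) < e"
proof -
  obtain T :: nat and \<beta> where "0 < \<beta>" "\<beta> \<le> 1"
    and contraction: "\<And>t. 0 \<le> t \<Longrightarrow> Max (y (t + real T) ` {..<N}) - Min (y (t + real T) ` {..<N})
        \<le> (1 - \<beta>) * (Max (y t ` {..<N}) - Min (y t ` {..<N}))"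
    by (rule consensus_dynamics_spread_contraction[OF cs \<open>0 < \<alpha>\<close> \<open>\<alpha> \<le> 1\<close> edge sc \<open>0 < N\<close>])
      (assumption | rule that)+
  define spread where "spread t = Max (y t ` {..<N}) - Min (y t ` {..<N})" for t
  have geometric: "spread (real (k * T)) \<le> (1 - \<beta>) ^ k * spread 0" for k
  proof (induction k)
    case (Suc k)
    have "spread (real (Suc k * T)) \<le> (1 - \<beta>) * spread (real (k * T))"
      using contraction[of "real (k * T)"] unfolding spread_def by (simp add: algebra_simps)
    also have "\<dots> \<le> (1 - \<beta>) * ((1 - \<beta>) ^ k * spread 0)"
      using Suc.IH \<open>\<beta> \<le> 1\<close> by (intro mult_left_mono) auto
    finally show ?case by simp
  qed simp
  have "(\<lambda>k. (1 - \<beta>) ^ k * spread 0) \<longlonglongrightarrow> 0"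
    using \<open>0 < \<beta>\<close> \<open>\<beta> \<le> 1\<close> by (intro tendsto_mult_left_zero LIMSEQ_power_zero) auto
  from order_tendstoD(2)[OF this \<open>0 < e\<close>]
  obtain k where "(1 - \<beta>) ^ k * spread 0 < e" by (auto simp: eventually_sequentially)
  with geometric[of k] show ?thesis unfolding spread_def by (intro exI[of _ "real (k * T)"]) auto
qed

lemma tendsto_between_monotone_envelopes:
  fixes lo hi :: "real \<Rightarrow> real"
  assumes lo_mono: "\<And>s t. 0 \<le> s \<Longrightarrow> s \<le> t \<Longrightarrow> lo s \<le> lo t"
    and hi_mono: "\<And>s t. 0 \<le> s \<Longrightarrow> s \<le> t \<Longrightarrow> hi t \<le> hi s"
    and lo_le_hi: "\<And>t. 0 \<le> t \<Longrightarrow> lo t \<le> hi t"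
    and gap: "\<And>e. 0 < e \<Longrightarrow> \<exists>t\<ge>0. hi t - lo t < e"
  obtains L where "\<And>f. (\<And>t. 0 \<le> t \<Longrightarrow> lo t \<le> f t \<and> f t \<le> hi t) \<Longrightarrow> (f \<longlongrightarrow> L) at_top"
proof
  define L where "L = Sup (lo ` {0..})"
  have lo_le_hi': "lo s \<le> hi t" if "0 \<le> s" "0 \<le> t" for s t
  proof -
    have "lo s \<le> lo (max s t)" "lo (max s t) \<le> hi (max s t)" "hi (max s t) \<le> hi t"
      using that by (auto intro: lo_mono hi_mono lo_le_hi)
    then show ?thesis by linarith
  qed
  have "bdd_above (lo ` {0..})"
    using lo_le_hi'[of _ 0] by (auto intro!: bdd_aboveI[where M = "hi 0"])
  then have L_between: "lo t \<le> L" "L \<le> hi t" if "0 \<le> t" for t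
    unfolding L_def using lo_le_hi' that by (auto intro: cSup_upper intro!: cSup_least)
  fix f assume between: "\<And>t. 0 \<le> t \<Longrightarrow> lo t \<le> f t \<and> f t \<le> hi t"
  show "(f \<longlongrightarrow> L) at_top"
  proof (rule tendstoI)
    fix e :: real assume "0 < e"
    then obtain t0 where "0 \<le> t0" "hi t0 - lo t0 < e" using gap by blast
    have "dist (f t) L < e" if "t0 \<le> t" for t
      using between[of t] L_between[OF \<open>0 \<le> t0\<close>] lo_mono[OF \<open>0 \<le> t0\<close> that]
        hi_mono[OF \<open>0 \<le> t0\<close> that] \<open>hi t0 - lo t0 < e\<close> \<open>0 \<le> t0\<close> that
      by (auto simp: dist_real_def)
    then show "\<forall>\<^sub>F t in at_top. dist (f t) L < e" by (auto simp: eventually_at_top_linorder)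
  qed
qed

theorem consensus_dynamics_consensus:
  assumes cs: "consensus_dynamics N y a" and "0 < \<alpha>" "\<alpha> \<le> 1"
    and edge: "\<And>t i j. 0 \<le> t \<Longrightarrow> i < N \<Longrightarrow> j < N \<Longrightarrow> i \<noteq> j \<Longrightarrow> 0 < W i j \<Longrightarrow> \<alpha> \<le> a t i j"
    and sc: "strongly_connected N W"
  shows "\<exists>L. \<forall>i<N. ((\<lambda>t. y t i) \<longlongrightarrow> L) at_top"
proof (cases "N = 0")
  case False
  define lo hi where "lo t = Min (y t ` {..<N})" and "hi t = Max (y t ` {..<N})" for t
  have fin: "finite (y t ` {..<N})" "y t ` {..<N} \<noteq> {}" for t using False by auto
  have between: "lo t \<le> y t i \<and> y t i \<le> hi t" if "i < N" for t i
    unfolding lo_def hi_def using fin that by auto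
  have lo_mono: "lo s \<le> lo t" if "0 \<le> s" "s \<le> t" for s t
    using consensus_dynamics_min_principle[OF cs that] between fin unfolding lo_def by simp
  have hi_mono: "hi t \<le> hi s" if "0 \<le> s" "s \<le> t" for s t
    using consensus_dynamics_max_principle[OF cs that] between fin unfolding hi_def by simp
  have lo_le_hi: "lo t \<le> hi t" for t using between[of 0 t] False by simp
  have gap: "\<exists>t\<ge>0. hi t - lo t < e" if "0 < e" for e
    using consensus_dynamics_spread_arbitrarily_small[OF cs \<open>0 < \<alpha>\<close> \<open>\<alpha> \<le> 1\<close> edge sc _ that] False
    unfolding lo_def hi_def by simp
  obtain L where L: "\<And>f. (\<And>t. 0 \<le> t \<Longrightarrow> lo t \<le> f t \<and> f t \<le> hi t) \<Longrightarrow> (f \<longlongrightarrow> L) at_top"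
    using tendsto_between_monotone_envelopes[OF lo_mono hi_mono lo_le_hi gap] by blast
  show ?thesis
  proof (intro exI allI impI)
    fix i assume "i < N"
    show "((\<lambda>t. y t i) \<longlongrightarrow> L) at_top" by (rule L) (use between[OF \<open>i < N\<close>] in blast)
  qed
qed simp

lemma logistic_nondecreasing:
  fixes v g :: "real \<Rightarrow> real"
  assumes deriv: "\<And>t. 0 \<le> t \<Longrightarrow> (v has_real_derivative v t * (1 - v t) * g t) (at t within {0..})"
    and range: "\<And>t. 0 \<le> t \<Longrightarrow> v t \<in> {0..1}" and g_nonneg: "\<And>t. 0 \<le> t \<Longrightarrow> 0 \<le> g t"
    and "0 \<le> s" "s \<le> t"
  shows "v s \<le> v t"
proof (rule DERIV_nonneg_imp_increasing_within[where S = "{0..}", OF \<open>s \<le> t\<close>])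
  fix \<tau> assume "\<tau> \<in> {s..t}"
  then have "0 \<le> \<tau>" using \<open>0 \<le> s\<close> by simp
  show "(v has_real_derivative v \<tau> * (1 - v \<tau>) * g \<tau>) (at \<tau> within {0..})"
    by (rule deriv[OF \<open>0 \<le> \<tau>\<close>])
  show "0 \<le> v \<tau> * (1 - v \<tau>) * g \<tau>"
    using range[OF \<open>0 \<le> \<tau>\<close>] g_nonneg[OF \<open>0 \<le> \<tau>\<close>] by simp
qed (use \<open>0 \<le> s\<close> in auto)

lemma logistic_stays_zero:
  fixes v g :: "real \<Rightarrow> real"
  assumes deriv: "\<And>t. 0 \<le> t \<Longrightarrow> (v has_real_derivative v t * (1 - v t) * g t) (at t within {0..})"
    and range: "\<And>t. 0 \<le> t \<Longrightarrow> v t \<in> {0..1}" and g_bounds: "\<And>t. 0 \<le> t \<Longrightarrow> g t \<in> {0..1}"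
    and "v 0 \<le> 0" and "0 \<le> t"
  shows "v t = 0"
proof -
  have "v t \<le> 0"
  proof (rule gronwall_nonpos[where S = "{0..}" and K = 1, OF \<open>0 \<le> t\<close>])
    show "(v has_real_derivative v \<tau> * (1 - v \<tau>) * g \<tau>) (at \<tau> within {0..})"
      if "\<tau> \<in> {0..t}" for \<tau>
      using that by (auto intro: deriv)
    fix \<tau> assume "\<tau> \<in> {0..t}"
    then have "v \<tau> \<in> {0..1}" "g \<tau> \<in> {0..1}" using range g_bounds by auto
    then have "v \<tau> * ((1 - v \<tau>) * g \<tau>) \<le> v \<tau> * 1" by (intro mult_left_mono mult_le_one) auto
    then show "v \<tau> * (1 - v \<tau>) * g \<tau> \<le> 1 * v \<tau>" by (simp add: mult.assoc)
  qed (use \<open>v 0 \<le> 0\<close> in auto)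
  with range[OF \<open>0 \<le> t\<close>] show ?thesis by simp
qed

text \<open>Since v never drops below v 0, the deficit 1 - v decays at least at the rate v 0 * \<delta>.\<close>
lemma logistic_deficit_exp_bound:
  fixes v g :: "real \<Rightarrow> real"
  assumes deriv: "\<And>t. 0 \<le> t \<Longrightarrow> (v has_real_derivative v t * (1 - v t) * g t) (at t within {0..})"
    and range: "\<And>t. 0 \<le> t \<Longrightarrow> v t \<in> {0..1}" and g_ge: "\<And>t. 0 \<le> t \<Longrightarrow> \<delta> \<le> g t"
    and "0 < \<delta>" and "0 \<le> t"
  shows "1 - v t \<le> (1 - v 0) * exp (- (v 0 * \<delta>) * t)"
proof -
  define r where "r = v 0 * \<delta>"
  have grown: "v 0 \<le> v \<tau>" if "0 \<le> \<tau>" for \<tau>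
  proof (rule logistic_nondecreasing[OF deriv range])
    show "0 \<le> g s" if "0 \<le> s" for s using g_ge[OF that] \<open>0 < \<delta>\<close> by simp
  qed (use that in auto)
  let ?V = "\<lambda>\<tau>. (1 - v \<tau>) - (1 - v 0) * exp (- r * \<tau>)"
  have "?V t \<le> 0"
  proof (rule gronwall_nonpos[where S = "{0..}" and K = "- r", OF \<open>0 \<le> t\<close>])
    show "(?V has_real_derivative - (v \<tau> * (1 - v \<tau>) * g \<tau>) + r * (1 - v 0) * exp (- r * \<tau>))
        (at \<tau> within {0..})" if "\<tau> \<in> {0..t}" for \<tau>
      using that by (auto intro!: derivative_eq_intros deriv)
    show "- (v \<tau> * (1 - v \<tau>) * g \<tau>) + r * (1 - v 0) * exp (- r * \<tau>) \<le> - r * ?V \<tau>"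
      if "\<tau> \<in> {0..t}" for \<tau>
    proof -
      have "v 0 * (1 - v \<tau>) * \<delta> \<le> v \<tau> * (1 - v \<tau>) * g \<tau>"
        using that grown range[of 0] range g_ge \<open>0 < \<delta>\<close> by (intro mult_mono) auto
      then show ?thesis unfolding r_def by (simp add: algebra_simps)
    qed
  qed simp_all
  then show ?thesis unfolding r_def by simp
qed

lemma logistic_tendsto_one:
  fixes v g :: "real \<Rightarrow> real"
  assumes deriv: "\<And>t. 0 \<le> t \<Longrightarrow> (v has_real_derivative v t * (1 - v t) * g t) (at t within {0..})"
    and range: "\<And>t. 0 \<le> t \<Longrightarrow> v t \<in> {0..1}" and g_ge: "\<And>t. 0 \<le> t \<Longrightarrow> \<delta> \<le> g t"
    and "0 < \<delta>" and "0 < v 0"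
  shows "(v \<longlongrightarrow> 1) at_top"
proof -
  define r where "r = v 0 * \<delta>"
  have exp_lim: "((\<lambda>t. exp (- r * t)) \<longlongrightarrow> 0) at_top"
    using \<open>0 < \<delta>\<close> \<open>0 < v 0\<close> unfolding r_def
    by (intro filterlim_compose[OF exp_at_bot]
        filterlim_tendsto_neg_mult_at_bot[OF tendsto_const] filterlim_ident) auto
  have lower_lim: "((\<lambda>t. 1 - (1 - v 0) * exp (- r * t)) \<longlongrightarrow> 1) at_top"
    using tendsto_diff[OF tendsto_const tendsto_mult_left[OF exp_lim], of 1 "1 - v 0"] by simp
  show ?thesis
  proof (rule tendsto_sandwich[OF _ _ lower_lim tendsto_const])
    have "1 - (1 - v 0) * exp (- r * t) \<le> v t" if "0 \<le> t" for t
      using logistic_deficit_exp_bound[OF deriv range g_ge \<open>0 < \<delta>\<close> that] unfolding r_def by linarith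
    then show "\<forall>\<^sub>F t in at_top. 1 - (1 - v 0) * exp (- r * t) \<le> v t"
      unfolding eventually_at_top_linorder by blast
    show "\<forall>\<^sub>F t in at_top. v t \<le> 1"
      unfolding eventually_at_top_linorder using range by fastforce
  qed
qed

lemma continuous_on_compact_gt_imp_margin:
  fixes f :: "'a::topological_space \<Rightarrow> real"
  assumes "compact S" "continuous_on S f" and gt: "\<And>x. x \<in> S \<Longrightarrow> c < f x"
  obtains \<delta> where "0 < \<delta>" "\<And>x. x \<in> S \<Longrightarrow> c + \<delta> \<le> f x"
proof (cases "S = {}")
  case True
  then show thesis using that[of 1] by simp
next
  case False
  then obtain x0 where "x0 \<in> S" and min: "\<And>x. x \<in> S \<Longrightarrow> f x0 \<le> f x"
    using continuous_attains_inf[OF assms(1) _ assms(2)] by blast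
  show thesis by (rule that[of "f x0 - c"]) (use gt[OF \<open>x0 \<in> S\<close>] min in auto)
qed

definition influence ::
  "nat \<Rightarrow> (real \<Rightarrow> real) \<Rightarrow> (real \<Rightarrow> nat \<Rightarrow> real) \<Rightarrow> (real \<Rightarrow> nat \<Rightarrow> nat \<Rightarrow> real) \<Rightarrow>
    real \<Rightarrow> nat \<Rightarrow> nat \<Rightarrow> real" where
  "influence N \<phi> x w t i j = w t i j * \<phi> (x t j - x t i) / degree N (w t) i"

lemma
  assumes "is_logistic_solution N \<phi> x w" and "0 \<le> t" and "i < N"
  shows logistic_solution_opinion_diff: "j < N \<Longrightarrow> x t j - x t i \<in> {-2..2}"
    and logistic_solution_weight_range: "j < N \<Longrightarrow> w t i j \<in> {0..1}"
    and logistic_solution_self_weight: "w t i i = 1"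
    and logistic_solution_opinion_deriv:
      "((\<lambda>s. x s i) has_real_derivative
          (1 / degree N (w t) i) * (\<Sum>j\<in>{..<N} - {i}. w t i j * \<phi> (x t j - x t i) * (x t j - x t i)))
        (at t within {0..})"
    and logistic_solution_weight_deriv:
      "j < N \<Longrightarrow> i \<noteq> j \<Longrightarrow> ((\<lambda>s. w s i j) has_real_derivative
          w t i j * (1 - w t i j) * (2 * \<phi> (x t j - x t i) - 1)) (at t within {0..})"
proof -
  note sol = assms(1)[unfolded is_logistic_solution_def]
  note x_range = sol[THEN conjunct1, rule_format]
    and w_range = sol[THEN conjunct2, THEN conjunct1, rule_format]
    and w_diag = sol[THEN conjunct2, THEN conjunct2, THEN conjunct1, rule_format]
    and x_deriv = sol[THEN conjunct2, THEN conjunct2, THEN conjunct2, THEN conjunct1, rule_format]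
    and w_deriv = sol[THEN conjunct2, THEN conjunct2, THEN conjunct2, THEN conjunct2, rule_format]
  show "x t j - x t i \<in> {-2..2}" if "j < N"
    using x_range[OF assms(2) that] x_range[OF assms(2,3)] by auto
  show "j < N \<Longrightarrow> w t i j \<in> {0..1}" "w t i i = 1"
    using w_range[OF assms(2,3)] w_diag[OF assms(2,3)] by simp_all
  show "((\<lambda>s. x s i) has_real_derivative
          (1 / degree N (w t) i) * (\<Sum>j\<in>{..<N} - {i}. w t i j * \<phi> (x t j - x t i) * (x t j - x t i)))
        (at t within {0..})"
    by (rule x_deriv[OF assms(2,3)])
  show "j < N \<Longrightarrow> i \<noteq> j \<Longrightarrow> ((\<lambda>s. w s i j) has_real_derivative
          w t i j * (1 - w t i j) * (2 * \<phi> (x t j - x t i) - 1)) (at t within {0..})"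
    by (rule w_deriv[OF assms(2,3)])
qed

lemma
  assumes sol: "is_logistic_solution N \<phi> x w" and "0 \<le> t" "i < N"
  shows logistic_solution_degree_eq: "degree N (w t) i = 1 + (\<Sum>j\<in>{..<N} - {i}. w t i j)"
    and logistic_solution_degree_ge_one: "1 \<le> degree N (w t) i"
    and logistic_solution_degree_le: "degree N (w t) i \<le> real N"
proof -
  show eq: "degree N (w t) i = 1 + (\<Sum>j\<in>{..<N} - {i}. w t i j)"
    unfolding degree_def using sum.remove[of "{..<N}" i "w t i"] assms
    by (simp add: logistic_solution_self_weight)
  have "0 \<le> (\<Sum>j\<in>{..<N} - {i}. w t i j)"
    using logistic_solution_weight_range[OF assms] by (intro sum_nonneg) auto
  with eq show "1 \<le> degree N (w t) i" by simp
  have "(\<Sum>j<N. w t i j) \<le> (\<Sum>j<N. 1)"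
    using logistic_solution_weight_range[OF assms] by (intro sum_mono) auto
  then show "degree N (w t) i \<le> real N" unfolding degree_def by simp
qed

lemma logistic_solution_consensus_dynamics:
  assumes sol: "is_logistic_solution N \<phi> x w"
    and phi_range: "\<And>r. r \<in> {-2..2} \<Longrightarrow> \<phi> r \<in> {0..1}"
  shows "consensus_dynamics N x (influence N \<phi> x w)"
proof -
  have deg: "1 \<le> degree N (w t) i" if "0 \<le> t" "i < N" for t i
    by (rule logistic_solution_degree_ge_one[OF sol that])
  have weight: "w t i j \<in> {0..1}" and phi: "\<phi> (x t j - x t i) \<in> {0..1}"
    if "0 \<le> t" "i < N" "j < N" for t i j
    using logistic_solution_weight_range[OF sol that] phi_range[OF logistic_solution_opinion_diff[OF sol that]]
    by auto
  have "((\<lambda>s. x s i) has_real_derivative consensus_drift N x (influence N \<phi> x w) t i)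
      (at t within {0..})" if "0 \<le> t" "i < N" for t i
  proof -
    have "(1 / degree N (w t) i) * (\<Sum>j\<in>{..<N} - {i}. w t i j * \<phi> (x t j - x t i) * (x t j - x t i))
        = consensus_drift N x (influence N \<phi> x w) t i"
      unfolding consensus_drift_def influence_def sum_distrib_left by (intro sum.cong) auto
    then show ?thesis using logistic_solution_opinion_deriv[OF sol that] by simp
  qed
  moreover have "0 \<le> influence N \<phi> x w t i j" if "0 \<le> t" "i < N" "j < N" for t i j
    unfolding influence_def using weight[OF that] phi[OF that] deg[OF that(1,2)] by simp
  moreover have "(\<Sum>j\<in>{..<N} - {i}. influence N \<phi> x w t i j) \<le> 1" if "0 \<le> t" "i < N" for t i
  proof -
    have "(\<Sum>j\<in>{..<N} - {i}. influence N \<phi> x w t i j) \<le> (\<Sum>j\<in>{..<N} - {i}. w t i j / degree N (w t) i)"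
      unfolding influence_def using weight[OF that] phi[OF that] deg[OF that]
      by (intro sum_mono divide_right_mono mult_right_le_one_le) auto
    also have "\<dots> = (degree N (w t) i - 1) / degree N (w t) i"
      unfolding sum_divide_distrib[symmetric] logistic_solution_degree_eq[OF sol that] by simp
    also have "\<dots> \<le> 1" using deg[OF that] by simp
    finally show ?thesis .
  qed
  ultimately show ?thesis unfolding consensus_dynamics_def by blast
qed

lemma logistic_solution_weight_nondecreasing:
  assumes sol: "is_logistic_solution N \<phi> x w"
    and phi_range: "\<And>r. r \<in> {-2..2} \<Longrightarrow> \<phi> r \<in> {1/2..1}"
    and "0 \<le> t" "i < N" "j < N"
  shows "w 0 i j \<le> w t i j"
proof (cases "i = j")
  case False
  show ?thesis
  proof (rule logistic_nondecreasing[where v = "\<lambda>t. w t i j" and g = "\<lambda>t. 2 * \<phi> (x t j - x t i) - 1"])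
    fix \<tau> :: real assume "0 \<le> \<tau>"
    note diff = logistic_solution_opinion_diff[OF sol \<open>0 \<le> \<tau>\<close> \<open>i < N\<close> \<open>j < N\<close>]
    show "((\<lambda>s. w s i j) has_real_derivative w \<tau> i j * (1 - w \<tau> i j) * (2 * \<phi> (x \<tau> j - x \<tau> i) - 1))
        (at \<tau> within {0..})"
      by (rule logistic_solution_weight_deriv[OF sol \<open>0 \<le> \<tau>\<close> \<open>i < N\<close> \<open>j < N\<close> False])
    show "w \<tau> i j \<in> {0..1}" by (rule logistic_solution_weight_range[OF sol \<open>0 \<le> \<tau>\<close> \<open>i < N\<close> \<open>j < N\<close>])
    show "0 \<le> 2 * \<phi> (x \<tau> j - x \<tau> i) - 1" using phi_range[OF diff] by simp
  qed (use \<open>0 \<le> t\<close> in auto)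
qed (use logistic_solution_self_weight[OF sol _ \<open>i < N\<close>] \<open>0 \<le> t\<close> in simp)

lemma logistic_solution_weight_tendsto:
  assumes sol: "is_logistic_solution N \<phi> x w"
    and phi_range: "\<And>r. r \<in> {-2..2} \<Longrightarrow> \<phi> r \<in> {0..1}"
    and "0 < \<delta>" and margin: "\<And>r. r \<in> {-2..2} \<Longrightarrow> \<delta> \<le> 2 * \<phi> r - 1"
    and "i < N" "j < N"
  shows "((\<lambda>t. w t i j) \<longlongrightarrow> (if 0 < w 0 i j then 1 else 0)) at_top"
proof (cases "i = j")
  case True
  have "\<forall>\<^sub>F t in at_top. w t i j = 1"
    by (rule eventually_at_top_linorderI[of 0])
      (use logistic_solution_self_weight[OF sol _ \<open>i < N\<close>] True in simp)
  then show ?thesis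
    using logistic_solution_self_weight[OF sol order_refl \<open>i < N\<close>] True by (simp add: tendsto_eventually)
next
  case False
  define g where "g t = 2 * \<phi> (x t j - x t i) - 1" for t
  have deriv: "((\<lambda>s. w s i j) has_real_derivative w t i j * (1 - w t i j) * g t) (at t within {0..})"
    and range: "w t i j \<in> {0..1}" and g_bounds: "\<delta> \<le> g t" "g t \<le> 1" if "0 \<le> t" for t
    using logistic_solution_weight_deriv[OF sol that \<open>i < N\<close> \<open>j < N\<close> False]
      logistic_solution_weight_range[OF sol that \<open>i < N\<close> \<open>j < N\<close>]
      margin[OF logistic_solution_opinion_diff[OF sol that \<open>i < N\<close> \<open>j < N\<close>]]
      phi_range[OF logistic_solution_opinion_diff[OF sol that \<open>i < N\<close> \<open>j < N\<close>]]
    unfolding g_def by auto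
  show ?thesis
  proof (cases "0 < w 0 i j")
    case True
    then show ?thesis
      using logistic_tendsto_one[where v = "\<lambda>t. w t i j", OF deriv range g_bounds(1) \<open>0 < \<delta>\<close>] by simp
  next
    case False
    have "w t i j = 0" if "0 \<le> t" for t
      using logistic_stays_zero[where v = "\<lambda>t. w t i j", OF deriv range _ _ that] g_bounds \<open>0 < \<delta>\<close> False
      by force
    then have "\<forall>\<^sub>F t in at_top. w t i j = 0" by (rule eventually_at_top_linorderI[of 0])
    then show ?thesis using False by (simp add: tendsto_eventually)
  qed
qed

lemma logistic_solution_influence_lower_bound:
  assumes sol: "is_logistic_solution N \<phi> x w"
    and phi_range: "\<And>r. r \<in> {-2..2} \<Longrightarrow> \<phi> r \<in> {1/2..1}" and "0 < N"
  obtains \<alpha> where "0 < \<alpha>" "\<alpha> \<le> 1"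
    "\<And>t i j. 0 \<le> t \<Longrightarrow> i < N \<Longrightarrow> j < N \<Longrightarrow> i \<noteq> j \<Longrightarrow> 0 < w 0 i j \<Longrightarrow>
      \<alpha> \<le> influence N \<phi> x w t i j"
proof -
  define w_min where "w_min = Min (insert 1 {w 0 i j |i j. i < N \<and> j < N \<and> 0 < w 0 i j})"
  have fin: "finite {w 0 i j |i j. i < N \<and> j < N \<and> 0 < w 0 i j}"
    using finite_image_set2[of "\<lambda>i. i < N" "\<lambda>j. j < N" "\<lambda>i j. w 0 i j"]
    by (rule rev_finite_subset) auto
  have "0 < w_min" "w_min \<le> 1" unfolding w_min_def using fin by auto
  have w_min_le: "w_min \<le> w 0 i j" if "i < N" "j < N" "0 < w 0 i j" for i j
    unfolding w_min_def using fin that by (intro Min_le) auto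
  define \<alpha> where "\<alpha> = w_min / 2 / real N"
  have "0 < \<alpha>" "\<alpha> \<le> 1"
    unfolding \<alpha>_def using \<open>0 < w_min\<close> \<open>w_min \<le> 1\<close> \<open>0 < N\<close> by (auto simp: field_simps)
  moreover have "\<alpha> \<le> influence N \<phi> x w t i j"
    if "0 \<le> t" "i < N" "j < N" "0 < w 0 i j" for t i j
  proof -
    have "w_min \<le> w t i j"
      using w_min_le[OF that(2-4)] logistic_solution_weight_nondecreasing[OF sol phi_range that(1-3)]
      by linarith
    moreover have "1/2 \<le> \<phi> (x t j - x t i)"
      using phi_range[OF logistic_solution_opinion_diff[OF sol that(1-3)]] by simp
    ultimately have "w_min / 2 \<le> w t i j * \<phi> (x t j - x t i)"
      using mult_mono[of w_min "w t i j" "1/2" "\<phi> (x t j - x t i)"] \<open>0 < w_min\<close> by simp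
    then show ?thesis
      unfolding \<alpha>_def influence_def
      using logistic_solution_degree_ge_one[OF sol that(1,2)] logistic_solution_degree_le[OF sol that(1,2)]
        \<open>0 < w_min\<close> by (intro frac_le) auto
  qed
  ultimately show thesis using that by blast
qed

theorem corollary2:
  fixes N :: nat and \<phi> :: "real \<Rightarrow> real"
    and x :: "real \<Rightarrow> nat \<Rightarrow> real" and w :: "real \<Rightarrow> nat \<Rightarrow> nat \<Rightarrow> real"
    and c :: real
  assumes phi_range: "\<forall>r\<in>{-2..2}. \<phi> r \<in> {0..1}"
    and phi_lip: "\<exists>L. L-lipschitz_on {-2..2} \<phi>"
    and phi_even: "\<forall>r\<in>{-2..2}. \<phi> (- r) = \<phi> r"
    and phi_0: "\<phi> 0 > 0"
    and sorted0: "\<forall>i j. i \<le> j \<and> j < N \<longrightarrow> x 0 i \<le> x 0 j"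
    and conn: "strongly_connected N (w 0)"
    and sol: "is_logistic_solution N \<phi> x w"
    and c_ge: "c \<ge> 1/2"
    and phi_gt: "\<forall>r\<in>{-2..2}. \<phi> r > c"
  shows "(\<exists>xstar. \<forall>i<N. ((\<lambda>t. x t i) \<longlongrightarrow> xstar) at_top) \<and>
         (\<forall>i<N. \<forall>j<N. ((\<lambda>t. w t i j) \<longlongrightarrow> (if w 0 i j > 0 then 1 else 0)) at_top)"
proof -
  have phi_01: "\<And>r. r \<in> {-2..2} \<Longrightarrow> \<phi> r \<in> {0..1}"
    and phi_half: "\<And>r. r \<in> {-2..2} \<Longrightarrow> \<phi> r \<in> {1/2..1}"
    using phi_range phi_gt c_ge by force+
  obtain L where "L-lipschitz_on {-2..2} \<phi>" using phi_lip by blast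
  then obtain d where "0 < d" and d: "\<And>r. r \<in> {-2..2} \<Longrightarrow> c + d \<le> \<phi> r"
    using continuous_on_compact_gt_imp_margin[of "{-2..2}" \<phi> c] phi_gt
    by (auto dest: lipschitz_on_continuous_on)
  have margin: "\<And>r. r \<in> {-2..2} \<Longrightarrow> 2 * d \<le> 2 * \<phi> r - 1" using d c_ge by force
  have "\<exists>xstar. \<forall>i<N. ((\<lambda>t. x t i) \<longlongrightarrow> xstar) at_top"
  proof (cases "N = 0")
    case False
    then obtain \<alpha> where "0 < \<alpha>" "\<alpha> \<le> 1" and edge: "\<And>t i j. 0 \<le> t \<Longrightarrow> i < N \<Longrightarrow> j < N \<Longrightarrow> i \<noteq> j \<Longrightarrow>
        0 < w 0 i j \<Longrightarrow> \<alpha> \<le> influence N \<phi> x w t i j"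
      using logistic_solution_influence_lower_bound[OF sol phi_half] by blast
    show ?thesis
      by (rule consensus_dynamics_consensus[OF logistic_solution_consensus_dynamics[OF sol phi_01]
            \<open>0 < \<alpha>\<close> \<open>\<alpha> \<le> 1\<close> edge conn])
  qed simp
  moreover have "\<forall>i<N. \<forall>j<N. ((\<lambda>t. w t i j) \<longlongrightarrow> (if w 0 i j > 0 then 1 else 0)) at_top"
    using logistic_solution_weight_tendsto[OF sol phi_01 _ margin] \<open>0 < d\<close> by simp
  ultimately show ?thesis ..
qed

end
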